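(* Let $h$ be the Hahn sequence space and let $\Delta:h\to h$ be the forward difference operator $(\Delta x)_k=x_k-x_{k+1}$. Then the spectrum of $\Delta$ on $h$ is $$\sigma(\Delta,h)=\{\alpha\in\mathbb{C}:|1-\alpha|\le 1\}.$$
   Context: Sequences are indexed by $\mathbb{N}=\{0,1,2,\dots\}$. The Hahn sequence space is $h=\{x=(x_k)\in\mathbb{C}^{\mathbb{N}}:\sum_{k=1}^\infty k|x_k-x_{k+1}|<\infty \text{ and } \lim_{k\to\infty}x_k=0\}$, a Banach space with the norm $\|x\|_h=\sum_k k|x_k-x_{k+1}|+\sup_k|x_k|$. The forward difference operator $\Delta$ is given by the infinite matrix with $1$ on the main diagonal, $-1$ on the first superdiagonal and $0$ elsewhere, i.e. $(\Delta x)_k=x_k-x_{k+1}$. For a bounded linear operator $T$ on a Banach space $X$, the spectrum $\sigma(T,X)$ is the set of $\alpha\in\mathbb{C}$ for which $\alpha I-T$ does not have a bounded inverse defined on all of $X$. *)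

theory Defs
  imports "HOL-Analysis.Analysis"
begin

text \<open>The Hahn sequence space h (sequences indexed by nat).  The k = 0 term
of the weighted sum has weight 0, so summing from 0 is the same as from 1.\<close>
definition hahn :: "(nat \<Rightarrow> complex) set" where
  "hahn = {x. summable (\<lambda>k. real k * cmod (x k - x (Suc k))) \<and> x \<longlonglongrightarrow> 0}"

definition hahn_norm :: "(nat \<Rightarrow> complex) \<Rightarrow> real" where
  "hahn_norm x = (\<Sum>k. real k * cmod (x k - x (Suc k))) + (SUP k. cmod (x k))"

definition fwd_diff :: "(nat \<Rightarrow> complex) \<Rightarrow> (nat \<Rightarrow> complex)" where
  "fwd_diff x = (\<lambda>k. x k - x (Suc k))"

definition has_bounded_inverse_on ::
  "'a set \<Rightarrow> ('a \<Rightarrow> real) \<Rightarrow> ('a \<Rightarrow> 'a) \<Rightarrow> bool" where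
  "has_bounded_inverse_on X nrm A \<longleftrightarrow>
     (\<exists>S. (\<forall>y\<in>X. S y \<in> X \<and> A (S y) = y) \<and> (\<forall>x\<in>X. S (A x) = x) \<and>
          (\<exists>C. \<forall>y\<in>X. nrm (S y) \<le> C * nrm y))"

definition seq_spectrum ::
  "(nat \<Rightarrow> complex) set \<Rightarrow> ((nat \<Rightarrow> complex) \<Rightarrow> real) \<Rightarrow>
   ((nat \<Rightarrow> complex) \<Rightarrow> (nat \<Rightarrow> complex)) \<Rightarrow> complex set" where
  "seq_spectrum X nrm T =
     {\<alpha>. \<not> has_bounded_inverse_on X nrm (\<lambda>x. (\<lambda>k. \<alpha> * x k - T x k))}"

end

theory Submission
  imports Defs
begin

text \<open>Write ((\<alpha> - \<Delta>) x) k = (\<alpha> - 1) x k + x (k + 1). If |1 - \<alpha>| \<le> 1, the geometric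
sequences r^k with r = t (1 - \<alpha>), 0 \<le> t < 1, lie in h and are eigenvectors with eigenvalue
(t - 1)(1 - \<alpha>), which tends to 0 as t \<rightarrow> 1; such approximate eigenvectors rule out a
bounded inverse. If |1 - \<alpha>| > 1, solving the recurrence backwards gives the inverse
x k = (\<Sum>n. (1 - \<alpha>)^-n y (k + n)) / (\<alpha> - 1). It commutes with \<Delta>, and as the weights
|1 - \<alpha>|^-n have sum |1 - \<alpha>| / (|1 - \<alpha>| - 1), both parts of the Hahn norm of x are bounded
by the corresponding parts for y divided by |1 - \<alpha>| - 1.\<close>

lemma summable_of_nat_times_power:
  fixes r :: real
  assumes "0 \<le> r" "r < 1"
  shows "summable (\<lambda>k. real k * r ^ k)"
proof -
  have "summable (\<lambda>n. diffs (\<lambda>_. 1) n * r ^ n)"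
    by (rule termdiff_converges[of r 1]) (use assms in \<open>auto intro: summable_geometric\<close>)
  then have "summable (\<lambda>n. real (Suc n) * r ^ n)"
    by (simp add: diffs_def)
  then show ?thesis
    by (rule summable_comparison_test[rotated]) (use assms in \<open>auto intro!: mult_right_mono\<close>)
qed

lemma summable_power_times_bounded:
  fixes q :: complex
  assumes "cmod q < 1" "Bseq z"
  shows "summable (\<lambda>n. cmod q ^ n * cmod (z n))"
proof -
  obtain M where M: "\<And>n. cmod (z n) \<le> M"
    using \<open>Bseq z\<close> by (auto simp: Bseq_def)
  have "summable (\<lambda>n. cmod q ^ n * M)"
    using assms by (intro summable_mult2 summable_geometric) auto
  then show ?thesis
    by (rule summable_comparison_test[rotated]) (auto intro!: mult_left_mono M)
qed

lemma cSUP_mult_left_real: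
  fixes f :: "'a \<Rightarrow> real"
  assumes "0 \<le> c" "bdd_above (range f)"
  shows "(SUP k. c * f k) = c * (SUP k. f k)"
proof (cases "c = 0")
  case False
  then have c: "0 < c" using assms by simp
  show ?thesis
  proof (rule antisym)
    show "(SUP k. c * f k) \<le> c * (SUP k. f k)"
      by (rule cSUP_least) (auto intro!: mult_left_mono cSUP_upper assms)
    obtain M where "\<And>k. f k \<le> M"
      using assms(2) by (auto simp: bdd_above_def)
    then have "bdd_above (range (\<lambda>k. c * f k))"
      using c by (intro bdd_aboveI2[of _ _ "c * M"]) (auto intro: mult_left_mono)
    then have "f k \<le> (SUP k. c * f k) / c" for k
      using c cSUP_upper[OF UNIV_I, of "\<lambda>k. c * f k"] by (simp add: field_simps mult.commute)
    then have "(SUP k. f k) \<le> (SUP k. c * f k) / c"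
      by (intro cSUP_least) auto
    then show "c * (SUP k. f k) \<le> (SUP k. c * f k)"
      using c by (simp add: field_simps mult.commute)
  qed
qed simp

lemma geometric_smoothing_summable:
  fixes g :: "nat \<Rightarrow> real"
  assumes g: "\<And>n. 0 \<le> g n" "summable g" and p: "0 \<le> p" "p < 1"
  shows "summable (\<lambda>n. p ^ n * g (k + n))"
    and "summable (\<lambda>k. \<Sum>n. p ^ n * g (k + n))"
    and "(\<Sum>k. \<Sum>n. p ^ n * g (k + n)) \<le> suminf g / (1 - p)"
proof -
  have geom: "summable (\<lambda>n. p ^ n)"
    using p by (intro summable_geometric) auto
  have tail: "(\<Sum>k<N. g (k + n)) \<le> suminf g" for N n
  proof -
    have "(\<Sum>k<N. g (k + n)) = sum g ((\<lambda>k. k + n) ` {..<N})"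
      by (subst sum.reindex) (auto simp: inj_on_def)
    also have "\<dots> \<le> suminf g"
      by (rule sum_le_suminf) (use g in auto)
    finally show ?thesis .
  qed
  have single: "g m \<le> suminf g" for m
    using tail[where N=1 and n=m] by simp
  show inner: "summable (\<lambda>n. p ^ n * g (k + n))" for k
    using single g p
    by (intro summable_comparison_test[OF _ summable_mult2[OF geom, of "suminf g"]])
       (auto intro!: mult_left_mono)
  have partial: "(\<Sum>k<N. \<Sum>n. p ^ n * g (k + n)) \<le> suminf g / (1 - p)" for N
  proof -
    have "(\<Sum>k<N. \<Sum>n. p ^ n * g (k + n)) = (\<Sum>n. p ^ n * (\<Sum>k<N. g (k + n)))"
      by (simp add: suminf_sum[OF inner] sum_distrib_left)
    also have "\<dots> \<le> (\<Sum>n. p ^ n * suminf g)"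
    proof (rule suminf_le)
      show "p ^ n * (\<Sum>k<N. g (k + n)) \<le> p ^ n * suminf g" for n
        using p tail by (intro mult_left_mono) auto
      show "summable (\<lambda>n. p ^ n * (\<Sum>k<N. g (k + n)))"
        using summable_sum[of "{..<N}", OF inner] by (simp add: sum_distrib_left)
      show "summable (\<lambda>n. p ^ n * suminf g)"
        by (rule summable_mult2[OF geom])
    qed
    also have "\<dots> = suminf g / (1 - p)"
      using p by (simp add: suminf_mult2[OF geom, symmetric] suminf_geometric)
    finally show ?thesis .
  qed
  have nonneg: "0 \<le> (\<Sum>n. p ^ n * g (k + n))" for k
    using inner g p by (intro suminf_nonneg) auto
  show "summable (\<lambda>k. \<Sum>n. p ^ n * g (k + n))"
  proof (rule bounded_imp_summable)
    show "(\<Sum>k\<le>N. \<Sum>n. p ^ n * g (k + n)) \<le> suminf g / (1 - p)" for N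
      using partial[of "Suc N"] by (simp only: lessThan_Suc_atMost)
  qed (rule nonneg)
  then show "(\<Sum>k. \<Sum>n. p ^ n * g (k + n)) \<le> suminf g / (1 - p)"
    using partial by (rule suminf_le_const)
qed

lemma approx_eigenvalue_imp_not_has_bounded_inverse:
  assumes nonneg: "\<And>x. x \<in> X \<Longrightarrow> 0 \<le> nrm x"
    and approx: "\<And>\<epsilon>. \<epsilon> > 0 \<Longrightarrow> \<exists>x\<in>X. A x \<in> X \<and> 0 < nrm x \<and> nrm (A x) \<le> \<epsilon> * nrm x"
  shows "\<not> has_bounded_inverse_on X nrm A"
proof
  assume "has_bounded_inverse_on X nrm A"
  then obtain S C where left: "\<And>x. x \<in> X \<Longrightarrow> S (A x) = x"
    and bound: "\<And>y. y \<in> X \<Longrightarrow> nrm (S y) \<le> C * nrm y"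
    unfolding has_bounded_inverse_on_def by metis
  obtain x where x: "x \<in> X" "A x \<in> X" "0 < nrm x" "nrm (A x) \<le> 1 / (\<bar>C\<bar> + 1) * nrm x"
    using approx[of "1 / (\<bar>C\<bar> + 1)"] by force
  have "nrm x \<le> C * nrm (A x)"
    using bound[OF x(2)] left[OF x(1)] by simp
  also have "\<dots> \<le> \<bar>C\<bar> * nrm (A x)"
    using nonneg[OF x(2)] by (intro mult_right_mono) auto
  also have "\<dots> \<le> \<bar>C\<bar> * (1 / (\<bar>C\<bar> + 1) * nrm x)"
    by (intro mult_left_mono x(4)) auto
  also have "\<dots> < nrm x"
    using x(3) by (simp add: field_simps)
  finally show False
    by simp
qed

lemma hahn_imp_Bseq: "x \<in> hahn \<Longrightarrow> Bseq x"
  unfolding hahn_def by (auto intro: convergent_imp_Bseq convergentI)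

lemma bdd_above_norm_hahn:
  assumes "x \<in> hahn"
  shows "bdd_above (range (\<lambda>k. cmod (x k)))"
  using hahn_imp_Bseq[OF assms] by (auto simp: Bseq_def intro: bdd_aboveI2)

lemma norm_le_hahn_norm:
  assumes "x \<in> hahn"
  shows "cmod (x k) \<le> hahn_norm x"
proof -
  have "0 \<le> (\<Sum>k. real k * cmod (x k - x (Suc k)))"
    using assms by (intro suminf_nonneg) (auto simp: hahn_def)
  moreover have "cmod (x k) \<le> (SUP k. cmod (x k))"
    using bdd_above_norm_hahn[OF assms] by (rule cSUP_upper[rotated]) simp
  ultimately show ?thesis
    unfolding hahn_norm_def by linarith
qed

lemma hahn_norm_nonneg: "x \<in> hahn \<Longrightarrow> 0 \<le> hahn_norm x"
  using norm_le_hahn_norm[of x 0] by (meson norm_ge_zero order_trans)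

lemma hahn_mult:
  assumes "x \<in> hahn"
  shows "(\<lambda>k. c * x k) \<in> hahn" and "hahn_norm (\<lambda>k. c * x k) = cmod c * hahn_norm x"
proof -
  have diff: "real k * cmod (c * x k - c * x (Suc k)) = cmod c * (real k * cmod (x k - x (Suc k)))" for k
    by (simp flip: right_diff_distrib add: norm_mult)
  have sum: "summable (\<lambda>k. real k * cmod (x k - x (Suc k)))" and lim: "x \<longlonglongrightarrow> 0"
    using assms by (auto simp: hahn_def)
  have "summable (\<lambda>k. real k * cmod (c * x k - c * x (Suc k)))"
    unfolding diff by (rule summable_mult[OF sum])
  then show "(\<lambda>k. c * x k) \<in> hahn"
    unfolding hahn_def using tendsto_mult_right_zero[OF lim] by simp
  have "(SUP k. cmod (c * x k)) = cmod c * (SUP k. cmod (x k))"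
    unfolding norm_mult by (rule cSUP_mult_left_real[OF norm_ge_zero bdd_above_norm_hahn[OF assms]])
  then show "hahn_norm (\<lambda>k. c * x k) = cmod c * hahn_norm x"
    unfolding hahn_norm_def diff suminf_mult[OF sum] by (simp add: distrib_left)
qed

lemma power_in_hahn:
  assumes "cmod r < 1"
  shows "(\<lambda>k. r ^ k) \<in> hahn"
proof -
  have "real k * cmod (r ^ k - r ^ Suc k) = real k * cmod r ^ k * cmod (1 - r)" for k
  proof -
    have "r ^ k - r ^ Suc k = r ^ k * (1 - r)"
      by (simp add: algebra_simps)
    then show ?thesis
      by (simp add: norm_mult norm_power)
  qed
  moreover have "summable (\<lambda>k. real k * cmod r ^ k * cmod (1 - r))"
    using summable_of_nat_times_power[of "cmod r"] assms by (intro summable_mult2) auto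
  ultimately have "summable (\<lambda>k. real k * cmod (r ^ k - r ^ Suc k))"
    by presburger
  then show ?thesis
    unfolding hahn_def using LIMSEQ_power_zero[of r] assms by simp
qed

lemma not_has_bounded_inverse_shifted_fwd_diff:
  assumes "cmod (1 - \<alpha>) \<le> 1"
  shows "\<not> has_bounded_inverse_on hahn hahn_norm (\<lambda>x k. \<alpha> * x k - fwd_diff x k)"
proof (rule approx_eigenvalue_imp_not_has_bounded_inverse)
  fix \<epsilon> :: real
  assume "\<epsilon> > 0"
  define t where "t = max 0 (1 - \<epsilon>)"
  have t: "0 \<le> t" "t < 1" "1 - t \<le> \<epsilon>"
    using \<open>\<epsilon> > 0\<close> by (auto simp: t_def)
  define r where "r = of_real t * (1 - \<alpha>)"
  have "cmod r \<le> t"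
    using t assms by (simp add: r_def norm_mult mult_left_le)
  then have r: "cmod r < 1"
    using t by simp
  have "r - (1 - \<alpha>) = - of_real (1 - t) * (1 - \<alpha>)"
    by (simp add: r_def algebra_simps)
  then have "cmod (r - (1 - \<alpha>)) = norm (of_real (1 - t) :: complex) * cmod (1 - \<alpha>)"
    by (simp only: norm_mult norm_minus_cancel)
  also have "\<dots> = (1 - t) * cmod (1 - \<alpha>)"
    using t by (subst norm_of_real) simp
  also have "\<dots> \<le> 1 - t"
    using t assms by (simp add: mult_left_le)
  also have "\<dots> \<le> \<epsilon>"
    using t by simp
  finally have small: "cmod (r - (1 - \<alpha>)) \<le> \<epsilon>" .
  define x where "x = (\<lambda>k. r ^ k)"
  have x: "x \<in> hahn"
    unfolding x_def by (rule power_in_hahn[OF r])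
  have eigen: "(\<lambda>k. \<alpha> * x k - fwd_diff x k) = (\<lambda>k. (r - (1 - \<alpha>)) * x k)"
    by (simp add: x_def fwd_diff_def fun_eq_iff algebra_simps)
  have "1 \<le> hahn_norm x"
    using norm_le_hahn_norm[OF x, of 0] by (simp add: x_def)
  moreover have "hahn_norm (\<lambda>k. (r - (1 - \<alpha>)) * x k) \<le> \<epsilon> * hahn_norm x"
    unfolding hahn_mult(2)[OF x] using small hahn_norm_nonneg[OF x] by (rule mult_right_mono)
  ultimately show "\<exists>x\<in>hahn. (\<lambda>k. \<alpha> * x k - fwd_diff x k) \<in> hahn \<and> 0 < hahn_norm x \<and>
      hahn_norm (\<lambda>k. \<alpha> * x k - fwd_diff x k) \<le> \<epsilon> * hahn_norm x"
    using x hahn_mult(1)[OF x] by (intro bexI[of _ x]) (simp_all only: eigen, auto)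
qed (rule hahn_norm_nonneg)

definition geom_tail :: "complex \<Rightarrow> (nat \<Rightarrow> complex) \<Rightarrow> nat \<Rightarrow> complex" where
  "geom_tail q y k = (\<Sum>n. q ^ n * y (k + n))"

lemma summable_geom_tail:
  assumes "cmod q < 1" "Bseq y"
  shows "summable (\<lambda>n. cmod q ^ n * cmod (y (k + n)))" "summable (\<lambda>n. q ^ n * y (k + n))"
proof -
  have "Bseq (\<lambda>n. y (k + n))"
    using Bseq_ignore_initial_segment[OF assms(2), of k] by (simp add: add.commute)
  then show norms: "summable (\<lambda>n. cmod q ^ n * cmod (y (k + n)))"
    by (rule summable_power_times_bounded[OF assms(1)])
  show "summable (\<lambda>n. q ^ n * y (k + n))"
    by (rule summable_norm_cancel) (use norms in \<open>simp add: norm_mult norm_power\<close>)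
qed

lemma geom_tail_Suc:
  assumes "cmod q < 1" "Bseq y"
  shows "geom_tail q y k = y k + q * geom_tail q y (Suc k)"
proof -
  have "(\<Sum>n. q ^ Suc n * y (k + Suc n)) = geom_tail q y k - y k"
    using suminf_split_head[OF summable_geom_tail(2)[OF assms, of k]] by (simp add: geom_tail_def)
  moreover have "(\<Sum>n. q ^ Suc n * y (k + Suc n)) = q * geom_tail q y (Suc k)"
    using suminf_mult[OF summable_geom_tail(2)[OF assms, of "Suc k"], of q]
    by (simp add: geom_tail_def mult.assoc)
  ultimately show ?thesis
    by (simp add: algebra_simps)
qed

lemma geom_tail_linear:
  assumes "cmod q < 1" "Bseq x" "Bseq z"
  shows "geom_tail q (\<lambda>k. a * x k + b * z k) k = a * geom_tail q x k + b * geom_tail q z k"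
proof -
  note sx = summable_geom_tail(2)[OF assms(1,2), of k]
  note sz = summable_geom_tail(2)[OF assms(1,3), of k]
  have "geom_tail q (\<lambda>k. a * x k + b * z k) k = (\<Sum>n. a * (q ^ n * x (k + n)) + b * (q ^ n * z (k + n)))"
    by (simp add: geom_tail_def algebra_simps)
  also have "\<dots> = a * geom_tail q x k + b * geom_tail q z k"
    unfolding geom_tail_def
    using suminf_add[OF summable_mult[OF sx] summable_mult[OF sz]] suminf_mult[OF sx] suminf_mult[OF sz]
    by simp
  finally show ?thesis .
qed

lemma norm_geom_tail_le:
  assumes "cmod q < 1" "Bseq y"
  shows "cmod (geom_tail q y k) \<le> (\<Sum>n. cmod q ^ n * cmod (y (k + n)))"
  unfolding geom_tail_def
  using summable_norm[of "\<lambda>n. q ^ n * y (k + n)"] summable_geom_tail(1)[OF assms]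
  by (simp add: norm_mult norm_power)

lemma norm_geom_tail_le_bound:
  assumes q: "cmod q < 1" and M: "\<And>n. cmod (y n) \<le> M"
  shows "cmod (geom_tail q y k) \<le> M / (1 - cmod q)"
proof -
  have y: "Bseq y"
    using M by (intro BseqI') auto
  have "cmod (geom_tail q y k) \<le> (\<Sum>n. cmod q ^ n * cmod (y (k + n)))"
    by (rule norm_geom_tail_le[OF q y])
  also have "\<dots> \<le> (\<Sum>n. cmod q ^ n * M)"
    using q summable_geom_tail(1)[OF q y]
    by (intro suminf_le summable_mult2 summable_geometric) (auto intro: mult_left_mono M)
  also have "\<dots> = M / (1 - cmod q)"
    using q by (simp add: suminf_mult2[symmetric] suminf_geometric)
  finally show ?thesis .
qed

lemma geom_tail_tendsto_zero:
  assumes q: "cmod q < 1" and y: "y \<longlonglongrightarrow> 0"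
  shows "geom_tail q y \<longlonglongrightarrow> 0"
proof -
  obtain M where M: "\<And>n. cmod (y n) \<le> M"
    using convergent_imp_Bseq[OF convergentI[OF y]] by (auto simp: Bseq_def)
  have "(\<lambda>k. \<Sum>n. q ^ n * y (k + n)) \<longlonglongrightarrow> (\<Sum>n. 0)"
  proof (rule tannerys_theorem[THEN conjunct2, THEN conjunct2])
    show "(\<lambda>k. q ^ n * y (k + n)) \<longlonglongrightarrow> 0" for n
      using LIMSEQ_ignore_initial_segment[OF y, of n]
      by (intro tendsto_mult_right_zero) (simp add: add.commute)
    show "\<forall>\<^sub>F (n, k) in at_top \<times>\<^sub>F sequentially. norm (q ^ n * y (k + n)) \<le> cmod q ^ n * M"
      by (intro always_eventually) (auto simp: norm_mult norm_power intro: mult_left_mono M)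
    show "summable (\<lambda>n. cmod q ^ n * M)"
      using q by (intro summable_mult2 summable_geometric) auto
  qed simp
  then show ?thesis
    by (simp add: geom_tail_def[abs_def])
qed

lemma weighted_geom_tail_summable:
  assumes q: "cmod q < 1" and d: "Bseq d" "summable (\<lambda>m. real m * cmod (d m))"
  shows "summable (\<lambda>k. real k * cmod (geom_tail q d k))"
    and "(\<Sum>k. real k * cmod (geom_tail q d k)) \<le> (\<Sum>m. real m * cmod (d m)) / (1 - cmod q)"
proof -
  define g where "g = (\<lambda>m. real m * cmod (d m))"
  define G where "G = (\<lambda>k. \<Sum>n. cmod q ^ n * g (k + n))"
  note smoothing = geometric_smoothing_summable[of g "cmod q", folded G_def]
  have g: "\<And>m. 0 \<le> g m" "summable g"
    using d(2) by (auto simp: g_def)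
  have le: "real k * cmod (geom_tail q d k) \<le> G k" for k
  proof -
    note s = summable_geom_tail(1)[OF q d(1), of k]
    have "real k * cmod (geom_tail q d k) \<le> real k * (\<Sum>n. cmod q ^ n * cmod (d (k + n)))"
      by (intro mult_left_mono norm_geom_tail_le[OF q d(1)]) auto
    also have "\<dots> = (\<Sum>n. cmod q ^ n * (real k * cmod (d (k + n))))"
      using suminf_mult[OF s, of "real k"] by (simp add: mult_ac)
    also have "\<dots> \<le> G k"
      unfolding G_def
    proof (rule suminf_le)
      show "cmod q ^ n * (real k * cmod (d (k + n))) \<le> cmod q ^ n * g (k + n)" for n
        unfolding g_def by (intro mult_left_mono mult_right_mono) auto
      show "summable (\<lambda>n. cmod q ^ n * (real k * cmod (d (k + n))))"
        using summable_mult[OF s, of "real k"] by (simp add: mult_ac)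
      show "summable (\<lambda>n. cmod q ^ n * g (k + n))"
        using smoothing(1) g q by simp
    qed
    finally show ?thesis .
  qed
  have G: "summable G" "suminf G \<le> suminf g / (1 - cmod q)"
    using smoothing(2,3) g q by simp_all
  show sum: "summable (\<lambda>k. real k * cmod (geom_tail q d k))"
    by (rule summable_comparison_test[OF _ G(1)]) (use le in auto)
  show "(\<Sum>k. real k * cmod (geom_tail q d k)) \<le> (\<Sum>m. real m * cmod (d m)) / (1 - cmod q)"
    using suminf_le[OF le sum G(1)] G(2) by (simp add: g_def)
qed

definition fwd_diff_resolvent :: "complex \<Rightarrow> (nat \<Rightarrow> complex) \<Rightarrow> nat \<Rightarrow> complex" where
  "fwd_diff_resolvent \<alpha> y k = geom_tail (1 / (1 - \<alpha>)) y k / (\<alpha> - 1)"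

lemma norm_recip_one_minus_lt_1: "1 < cmod (1 - \<alpha>) \<Longrightarrow> cmod (1 / (1 - \<alpha>)) < 1"
  by (simp add: norm_divide divide_simps)

lemma fwd_diff_resolvent_eq:
  assumes \<alpha>: "1 < cmod (1 - \<alpha>)" and y: "Bseq y"
  shows "(\<alpha> - 1) * fwd_diff_resolvent \<alpha> y k + fwd_diff_resolvent \<alpha> y (Suc k) = y k"
proof -
  have "\<alpha> \<noteq> 1"
    using \<alpha> by auto
  moreover have "1 / (1 - \<alpha>) * z = - (z / (\<alpha> - 1))" for z
    by (simp add: divide_simps algebra_simps)
  ultimately show ?thesis
    using geom_tail_Suc[OF norm_recip_one_minus_lt_1[OF \<alpha>] y, of k]
    by (simp add: fwd_diff_resolvent_def)
qed

lemma fwd_diff_resolvent_right_inverse: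
  assumes "1 < cmod (1 - \<alpha>)" "Bseq y"
  shows "(\<lambda>k. \<alpha> * fwd_diff_resolvent \<alpha> y k - fwd_diff (fwd_diff_resolvent \<alpha> y) k) = y"
  using fwd_diff_resolvent_eq[OF assms]
  by (simp add: fwd_diff_def fun_eq_iff algebra_simps)

lemma fwd_diff_resolvent_linear:
  assumes \<alpha>: "1 < cmod (1 - \<alpha>)" and y: "Bseq y"
  shows "fwd_diff_resolvent \<alpha> (\<lambda>k. a * y k + b * y (Suc k)) k =
    a * fwd_diff_resolvent \<alpha> y k + b * fwd_diff_resolvent \<alpha> y (Suc k)"
proof -
  have "geom_tail (1 / (1 - \<alpha>)) (\<lambda>k. y (Suc k)) k = geom_tail (1 / (1 - \<alpha>)) y (Suc k)"
    by (simp add: geom_tail_def)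
  then show ?thesis
    using geom_tail_linear[OF norm_recip_one_minus_lt_1[OF \<alpha>] y iffD2[OF Bseq_Suc_iff y], of a b k]
    by (simp add: fwd_diff_resolvent_def add_divide_distrib)
qed

lemma fwd_diff_resolvent_left_inverse:
  assumes \<alpha>: "1 < cmod (1 - \<alpha>)" and x: "Bseq x"
  shows "fwd_diff_resolvent \<alpha> (\<lambda>k. \<alpha> * x k - fwd_diff x k) = x"
proof
  fix k
  have "(\<lambda>k. \<alpha> * x k - fwd_diff x k) = (\<lambda>k. (\<alpha> - 1) * x k + 1 * x (Suc k))"
    by (simp add: fwd_diff_def fun_eq_iff algebra_simps)
  then show "fwd_diff_resolvent \<alpha> (\<lambda>k. \<alpha> * x k - fwd_diff x k) k = x k"
    using fwd_diff_resolvent_linear[OF \<alpha> x, of "\<alpha> - 1" 1 k] fwd_diff_resolvent_eq[OF \<alpha> x, of k]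
    by simp
qed

lemma fwd_diff_fwd_diff_resolvent:
  assumes \<alpha>: "1 < cmod (1 - \<alpha>)" and y: "Bseq y"
  shows "fwd_diff (fwd_diff_resolvent \<alpha> y) = fwd_diff_resolvent \<alpha> (fwd_diff y)"
proof
  fix k
  have "fwd_diff y = (\<lambda>k. 1 * y k + (- 1) * y (Suc k))"
    by (simp add: fwd_diff_def fun_eq_iff)
  then show "fwd_diff (fwd_diff_resolvent \<alpha> y) k = fwd_diff_resolvent \<alpha> (fwd_diff y) k"
    using fwd_diff_resolvent_linear[OF \<alpha> y, of 1 "- 1" k] by (simp add: fwd_diff_def)
qed

lemma norm_fwd_diff_resolvent_le:
  assumes \<alpha>: "1 < cmod (1 - \<alpha>)" and M: "\<And>n. cmod (y n) \<le> M"
  shows "cmod (fwd_diff_resolvent \<alpha> y k) \<le> M / (cmod (1 - \<alpha>) - 1)"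
proof -
  have "cmod (fwd_diff_resolvent \<alpha> y k) = cmod (geom_tail (1 / (1 - \<alpha>)) y k) / cmod (1 - \<alpha>)"
    by (simp add: fwd_diff_resolvent_def norm_divide norm_minus_commute)
  also have "\<dots> \<le> M / (1 - cmod (1 / (1 - \<alpha>))) / cmod (1 - \<alpha>)"
    by (intro divide_right_mono norm_geom_tail_le_bound[OF norm_recip_one_minus_lt_1[OF \<alpha>] M]) auto
  also have "\<dots> = M / (cmod (1 - \<alpha>) - 1)"
    using \<alpha> by (auto simp: norm_divide field_simps)
  finally show ?thesis .
qed

lemma weighted_fwd_diff_resolvent_summable:
  assumes \<alpha>: "1 < cmod (1 - \<alpha>)" and y: "y \<in> hahn"
  shows "summable (\<lambda>k. real k * cmod (fwd_diff (fwd_diff_resolvent \<alpha> y) k))"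
    and "(\<Sum>k. real k * cmod (fwd_diff (fwd_diff_resolvent \<alpha> y) k)) \<le>
      (\<Sum>k. real k * cmod (fwd_diff y k)) / (cmod (1 - \<alpha>) - 1)"
proof -
  define q where "q = 1 / (1 - \<alpha>)"
  have q: "cmod q < 1"
    unfolding q_def by (rule norm_recip_one_minus_lt_1[OF \<alpha>])
  have "\<alpha> \<noteq> 1"
    using \<alpha> by auto
  then have scale: "c / (1 - cmod q) / cmod (\<alpha> - 1) = c / (cmod (1 - \<alpha>) - 1)" for c
    using \<alpha> by (simp add: q_def norm_divide norm_minus_commute field_simps)
  have y0: "y \<longlonglongrightarrow> 0" and ds: "summable (\<lambda>k. real k * cmod (fwd_diff y k))"
    using y by (auto simp: hahn_def fwd_diff_def)
  have "fwd_diff y \<longlonglongrightarrow> 0"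
    unfolding fwd_diff_def using tendsto_diff[OF y0 LIMSEQ_Suc[OF y0]] by simp
  then have dB: "Bseq (fwd_diff y)"
    by (rule convergent_imp_Bseq[OF convergentI])
  have diff: "real k * cmod (fwd_diff (fwd_diff_resolvent \<alpha> y) k) =
      real k * cmod (geom_tail q (fwd_diff y) k) / cmod (\<alpha> - 1)" for k
    unfolding fwd_diff_fwd_diff_resolvent[OF \<alpha> hahn_imp_Bseq[OF y]]
    by (simp add: q_def fwd_diff_resolvent_def norm_divide)
  note weighted = weighted_geom_tail_summable[OF q dB ds]
  show "summable (\<lambda>k. real k * cmod (fwd_diff (fwd_diff_resolvent \<alpha> y) k))"
    unfolding diff by (rule summable_divide[OF weighted(1)])
  show "(\<Sum>k. real k * cmod (fwd_diff (fwd_diff_resolvent \<alpha> y) k)) \<le>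
      (\<Sum>k. real k * cmod (fwd_diff y k)) / (cmod (1 - \<alpha>) - 1)"
    unfolding diff suminf_divide[OF weighted(1)] scale[symmetric]
    using weighted(2) by (intro divide_right_mono) auto
qed

lemma fwd_diff_resolvent_hahn:
  assumes \<alpha>: "1 < cmod (1 - \<alpha>)" and y: "y \<in> hahn"
  shows "fwd_diff_resolvent \<alpha> y \<in> hahn"
    and "hahn_norm (fwd_diff_resolvent \<alpha> y) \<le> hahn_norm y / (cmod (1 - \<alpha>) - 1)"
proof -
  define R where "R = fwd_diff_resolvent \<alpha> y"
  note weighted = weighted_fwd_diff_resolvent_summable[OF \<alpha> y, folded R_def, unfolded fwd_diff_def]
  define S where "S = (SUP k. cmod (y k))"
  have "cmod (y k) \<le> S" for k
    unfolding S_def by (rule cSUP_upper[OF UNIV_I bdd_above_norm_hahn[OF y]])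
  then have "cmod (R k) \<le> S / (cmod (1 - \<alpha>) - 1)" for k
    unfolding R_def by (rule norm_fwd_diff_resolvent_le[OF \<alpha>])
  then have sup_le: "(SUP k. cmod (R k)) \<le> S / (cmod (1 - \<alpha>) - 1)"
    by (intro cSUP_least) auto
  have "y \<longlonglongrightarrow> 0"
    using y by (simp add: hahn_def)
  then have "R \<longlonglongrightarrow> 0"
    unfolding R_def fwd_diff_resolvent_def[abs_def]
    by (intro tendsto_divide_zero geom_tail_tendsto_zero norm_recip_one_minus_lt_1[OF \<alpha>])
  then show "R \<in> hahn"
    unfolding hahn_def using weighted(1) by simp
  have "hahn_norm R \<le>
      (\<Sum>k. real k * cmod (y k - y (Suc k))) / (cmod (1 - \<alpha>) - 1) + S / (cmod (1 - \<alpha>) - 1)"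
    unfolding hahn_norm_def using weighted(2) sup_le by linarith
  also have "\<dots> = hahn_norm y / (cmod (1 - \<alpha>) - 1)"
    by (simp add: hahn_norm_def S_def add_divide_distrib)
  finally show "hahn_norm R \<le> hahn_norm y / (cmod (1 - \<alpha>) - 1)" .
qed

lemma has_bounded_inverse_shifted_fwd_diff:
  assumes \<alpha>: "1 < cmod (1 - \<alpha>)"
  shows "has_bounded_inverse_on hahn hahn_norm (\<lambda>x k. \<alpha> * x k - fwd_diff x k)"
  unfolding has_bounded_inverse_on_def
proof (intro exI[of _ "fwd_diff_resolvent \<alpha>"] exI[of _ "1 / (cmod (1 - \<alpha>) - 1)"] conjI ballI)
  fix y
  assume y: "y \<in> hahn"
  show "fwd_diff_resolvent \<alpha> y \<in> hahn"
    by (rule fwd_diff_resolvent_hahn(1)[OF \<alpha> y])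
  show "(\<lambda>k. \<alpha> * fwd_diff_resolvent \<alpha> y k - fwd_diff (fwd_diff_resolvent \<alpha> y) k) = y"
    by (rule fwd_diff_resolvent_right_inverse[OF \<alpha> hahn_imp_Bseq[OF y]])
  show "hahn_norm (fwd_diff_resolvent \<alpha> y) \<le> 1 / (cmod (1 - \<alpha>) - 1) * hahn_norm y"
    using fwd_diff_resolvent_hahn(2)[OF \<alpha> y] by simp
next
  fix x
  assume "x \<in> hahn"
  then show "fwd_diff_resolvent \<alpha> (\<lambda>k. \<alpha> * x k - fwd_diff x k) = x"
    by (rule fwd_diff_resolvent_left_inverse[OF \<alpha> hahn_imp_Bseq])
qed

theorem theorem4p1:
  shows "seq_spectrum hahn hahn_norm fwd_diff = {\<alpha>. cmod (1 - \<alpha>) \<le> 1}"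
  unfolding seq_spectrum_def
  using has_bounded_inverse_shifted_fwd_diff not_has_bounded_inverse_shifted_fwd_diff
  by (meson not_le)

end
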